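(* Let $\delta,\varepsilon,\varepsilon'>0$ and $M\in\mathbb{N}$. Let $\mu$ be a distribution on $\{0,1\}^n\times\{0,1\}^n$ and $f\colon\{0,1\}^n\times\{0,1\}^n\to\{0,1\}$ such that $(f,\mu)$ has $(\varepsilon,\delta)$ relative-discrepancy. If $\Pi$ is a protocol with universal external information at most $M$, then for $(X,Y)\sim\mu$, \[ \mathrm{SD}\big(\Pi(X,Y)|_{f(X,Y)=0},\ \Pi(X,Y)|_{f(X,Y)=1}\big)\le 20\Big(\varepsilon+\varepsilon'+\frac{2^{4M}}{\varepsilon'^2}\delta\Big). \]
   Context: $\mathrm{SD}(P,Q)=\frac12\sum_u|P(u)-Q(u)|$ is statistical distance. $(f,\mu)$ has $(\varepsilon,\delta)$ relative-discrepancy if there is a distribution $\rho$ such that for every rectangle $R=A\times B$ with $\rho(R)\ge\delta$, $\mu(R\cap f^{-1}(0))\ge(\frac12-\varepsilon)\rho(R)$ and $\mu(R\cap f^{-1}(1))\ge(\frac12-\varepsilon)\rho(R)$. Protocols: Alice and Bob alternate, Alice sending $A_1,\dots,A_m$, Bob $B_1,\dots,B_m$, order $A_1,B_1,A_2,\dots$, each message depending on the sender's input, previous messages and the sender's randomness. For transcript $\pi=(a,b)$, $P^x_A(\pi)=\prod_j\Pr[A_j=a_j\mid A_{<j}=a_{<j},B_{<j}=b_{<j},X=x]$, $P^y_B(\pi)=\prod_j\Pr[B_j=b_j\mid A_{\le j}=a_{\le j},B_{<j}=b_{<j},Y=y]$. Universal external information at most $M$: there exist non-negative $\eta_A,\eta_B$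 on transcripts with $\eta_A\eta_B$ a probability distribution and, for all $x,y,\pi$, $2^{-M}\le P^x_A(\pi)/\eta_A(\pi)\le2^M$ and $2^{-M}\le P^y_B(\pi)/\eta_B(\pi)\le 2^M$. *)

theory Defs
  imports Complex_Main
begin

definition cube :: "nat \<Rightarrow> bool list set" where
  "cube n = {xs. length xs = n}"

text \<open>A probability distribution on a finite set S (values outside S are irrelevant).\<close>
definition is_dist :: "'u set \<Rightarrow> ('u \<Rightarrow> real) \<Rightarrow> bool" where
  "is_dist S p \<longleftrightarrow> (\<forall>u\<in>S. 0 \<le> p u) \<and> (\<Sum>u\<in>S. p u) = 1"

definition wt :: "('u \<Rightarrow> real) \<Rightarrow> 'u set \<Rightarrow> real" where
  "wt p S = (\<Sum>u\<in>S. p u)"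

text \<open>Boolean f: output 0 is False, output 1 is True.\<close>
definition rel_discrepancy ::
  "nat \<Rightarrow> (bool list \<times> bool list \<Rightarrow> bool) \<Rightarrow> (bool list \<times> bool list \<Rightarrow> real) \<Rightarrow> real \<Rightarrow> real \<Rightarrow> bool" where
  "rel_discrepancy n f \<mu> \<epsilon> \<delta> \<longleftrightarrow>
     (\<exists>\<rho>. is_dist (cube n \<times> cube n) \<rho> \<and>
        (\<forall>A B. A \<subseteq> cube n \<longrightarrow> B \<subseteq> cube n \<longrightarrow> wt \<rho> (A \<times> B) \<ge> \<delta> \<longrightarrow>
           wt \<mu> ((A \<times> B) \<inter> {u. \<not> f u}) \<ge> (1/2 - \<epsilon>) * wt \<rho> (A \<times> B) \<and>
           wt \<mu> ((A \<times> B) \<inter> {u. f u}) \<ge> (1/2 - \<epsilon>) * wt \<rho> (A \<times> B)))"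

text \<open>A private-coin protocol with m rounds (Alice sends A_1, Bob B_1, Alice A_2, ...),
  messages from a finite alphabet 'm, given by its next-message kernels:
  \<open>alice j x (a,b) c\<close> = Pr[A_(j+1) = c | previous messages a (Alice's first j) and b (Bob's first j), X = x];
  \<open>bob j y (a,b) c\<close> = Pr[B_(j+1) = c | a = Alice's first j+1, b = Bob's first j, Y = y].\<close>
type_synonym 'm kernel = "nat \<Rightarrow> bool list \<Rightarrow> 'm list \<times> 'm list \<Rightarrow> 'm \<Rightarrow> real"

definition valid_protocol :: "nat \<Rightarrow> nat \<Rightarrow> ('m::finite) kernel \<Rightarrow> 'm kernel \<Rightarrow> bool" where
  "valid_protocol n m alice bob \<longleftrightarrow>
     (\<forall>j<m. \<forall>x\<in>cube n. \<forall>h. (\<forall>c. 0 \<le> alice j x h c) \<and> (\<Sum>c\<in>UNIV. alice j x h c) = 1) \<and>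
     (\<forall>j<m. \<forall>y\<in>cube n. \<forall>h. (\<forall>c. 0 \<le> bob j y h c) \<and> (\<Sum>c\<in>UNIV. bob j y h c) = 1)"

definition transcripts :: "nat \<Rightarrow> ('m list \<times> 'm list) set" where
  "transcripts m = {(a, b). length a = m \<and> length b = m}"

definition PA :: "nat \<Rightarrow> 'm kernel \<Rightarrow> bool list \<Rightarrow> 'm list \<times> 'm list \<Rightarrow> real" where
  "PA m alice x \<pi> = (\<Prod>j<m. alice j x (take j (fst \<pi>), take j (snd \<pi>)) (fst \<pi> ! j))"

definition PB :: "nat \<Rightarrow> 'm kernel \<Rightarrow> bool list \<Rightarrow> 'm list \<times> 'm list \<Rightarrow> real" where
  "PB m bob y \<pi> = (\<Prod>j<m. bob j y (take (Suc j) (fst \<pi>), take j (snd \<pi>)) (snd \<pi> ! j))"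

definition univ_ext_info_le ::
  "nat \<Rightarrow> nat \<Rightarrow> ('m::finite) kernel \<Rightarrow> 'm kernel \<Rightarrow> nat \<Rightarrow> bool" where
  "univ_ext_info_le n m alice bob M \<longleftrightarrow>
     (\<exists>\<eta>A \<eta>B. (\<forall>\<pi>\<in>transcripts m. 0 \<le> \<eta>A \<pi> \<and> 0 \<le> \<eta>B \<pi>) \<and>
        (\<Sum>\<pi>\<in>transcripts m. \<eta>A \<pi> * \<eta>B \<pi>) = 1 \<and>
        (\<forall>x\<in>cube n. \<forall>y\<in>cube n. \<forall>\<pi>\<in>transcripts m.
           (1/2) ^ M \<le> PA m alice x \<pi> / \<eta>A \<pi> \<and> PA m alice x \<pi> / \<eta>A \<pi> \<le> 2 ^ M \<and>
           (1/2) ^ M \<le> PB m bob y \<pi> / \<eta>B \<pi> \<and> PB m bob y \<pi> / \<eta>B \<pi> \<le> 2 ^ M))"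

text \<open>Distribution of the transcript \<Pi>(X,Y) for (X,Y) ~ \<mu>, conditioned on f(X,Y) = c.\<close>
definition cond_transcript ::
  "nat \<Rightarrow> nat \<Rightarrow> 'm kernel \<Rightarrow> 'm kernel \<Rightarrow> (bool list \<times> bool list \<Rightarrow> real)
    \<Rightarrow> (bool list \<times> bool list \<Rightarrow> bool) \<Rightarrow> bool \<Rightarrow> 'm list \<times> 'm list \<Rightarrow> real" where
  "cond_transcript n m alice bob \<mu> f c \<pi> =
     (\<Sum>u\<in>(cube n \<times> cube n) \<inter> {u. f u = c}. \<mu> u * PA m alice (fst u) \<pi> * PB m bob (snd u) \<pi>)
     / wt \<mu> ((cube n \<times> cube n) \<inter> {u. f u = c})"

definition SD :: "'u set \<Rightarrow> ('u \<Rightarrow> real) \<Rightarrow> ('u \<Rightarrow> real) \<Rightarrow> real" where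
  "SD S P Q = (1/2) * (\<Sum>u\<in>S. \<bar>P u - Q u\<bar>)"

end

(*
  For a fixed transcript, Pr[Pi(x,y) = pi] = P_A^x(pi) P_B^y(pi), and after dividing by
  eta_A(pi) eta_B(pi) this is a product a(x) b(y) of weights in [0, 2^M].  Relative
  discrepancy says that the signed measure mu restricted to f = c, minus (1/2 - eps) rho, has
  mass at least -delta/2 on every rectangle; such a bound passes to bilinear forms with
  weights in [0, K] at the cost of a factor K^2, the worst case being the rectangle of rows
  and then columns with negative partial sums.  So both conditional transcript masses
  dominate one function L of total mass 1/2 - eps - delta 4^M / 2, which bounds the
  statistical distance by 4 eps + delta 4^M; the stated bound follows by comparing
  delta 4^M with eps' and its square with 2^(4M) delta.
*)
theory Submission
  imports Defs
begin

lemma finite_cube: "finite (cube n)"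
  using finite_lists_length_eq[of "UNIV :: bool set" n] by (simp add: cube_def)

lemma replicate_in_cube: "replicate n False \<in> cube n"
  by (simp add: cube_def)

lemma finite_transcripts: "finite (transcripts m :: ('m::finite list \<times> 'm list) set)"
proof -
  have "transcripts m = {xs :: 'm list. length xs = m} \<times> {xs. length xs = m}"
    by (auto simp: transcripts_def)
  then show ?thesis
    using finite_lists_length_eq[of "UNIV :: 'm set" m] by simp
qed

lemma transcripts_0: "transcripts 0 = {([], [])}"
  by (auto simp: transcripts_def)

lemma transcripts_Suc:
  "transcripts (Suc k) = (\<lambda>((a, b), c, d). (a @ [c], b @ [d])) ` (transcripts k \<times> UNIV)"
proof (intro set_eqI iffI)
  fix \<pi> :: "'a list \<times> 'a list"
  assume "\<pi> \<in> transcripts (Suc k)"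
  then obtain a b where "\<pi> = (a, b)" "length a = Suc k" "length b = Suc k"
    by (auto simp: transcripts_def)
  then show "\<pi> \<in> (\<lambda>((a, b), c, d). (a @ [c], b @ [d])) ` (transcripts k \<times> UNIV)"
    by (auto simp: transcripts_def image_iff length_Suc_conv_rev)
qed (auto simp: transcripts_def)

lemma sum_transcripts_Suc:
  "(\<Sum>\<pi>\<in>transcripts (Suc k). g \<pi>) =
     (\<Sum>(a, b)\<in>transcripts k. \<Sum>c\<in>UNIV. \<Sum>d\<in>UNIV. g (a @ [c], b @ [d :: 'm::finite]))"
proof -
  have "inj_on (\<lambda>((a, b), c, d). (a @ [c], b @ [d :: 'm])) (transcripts k \<times> UNIV)"
    by (auto simp: inj_on_def)
  then have "(\<Sum>\<pi>\<in>transcripts (Suc k). g \<pi>) =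
      (\<Sum>((a, b), c, d)\<in>transcripts k \<times> UNIV. g (a @ [c], b @ [d]))"
    by (simp add: transcripts_Suc sum.reindex case_prod_unfold)
  also have "\<dots> = (\<Sum>(a, b)\<in>transcripts k. \<Sum>(c, d)\<in>UNIV. g (a @ [c], b @ [d]))"
    by (simp add: sum.cartesian_product case_prod_unfold)
  also have "\<dots> = (\<Sum>(a, b)\<in>transcripts k. \<Sum>c\<in>UNIV. \<Sum>d\<in>UNIV. g (a @ [c], b @ [d]))"
    by (simp add: sum.cartesian_product flip: UNIV_Times_UNIV)
  finally show ?thesis .
qed

lemma PA_snoc:
  assumes "length a = k" "length b = k"
  shows "PA (Suc k) alice x (a @ [c], b @ [d]) = PA k alice x (a, b) * alice k x (a, b) c"
  using assms unfolding PA_def by (auto simp: nth_append intro!: prod.cong)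

lemma PB_snoc:
  assumes "length a = k" "length b = k"
  shows "PB (Suc k) bob y (a @ [c], b @ [d]) = PB k bob y (a, b) * bob k y (a @ [c], b) d"
  using assms unfolding PB_def by (auto simp: nth_append intro!: prod.cong)

lemma sum_PA_PB_transcripts:
  assumes "valid_protocol n m alice bob" "x \<in> cube n" "y \<in> cube n" "k \<le> m"
  shows "(\<Sum>\<pi>\<in>transcripts k. PA k alice x \<pi> * PB k bob y \<pi>) = 1"
  using \<open>k \<le> m\<close>
proof (induction k)
  case 0
  then show ?case
    by (simp add: transcripts_0 PA_def PB_def)
next
  case (Suc k)
  have alice1: "(\<Sum>c\<in>UNIV. alice k x h c) = 1" and bob1: "(\<Sum>d\<in>UNIV. bob k y h d) = 1" for h
    using assms(1-3) \<open>Suc k \<le> m\<close> unfolding valid_protocol_def Suc_le_eq by blast+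
  have "(\<Sum>\<pi>\<in>transcripts (Suc k). PA (Suc k) alice x \<pi> * PB (Suc k) bob y \<pi>)
      = (\<Sum>(a, b)\<in>transcripts k. PA k alice x (a, b) * PB k bob y (a, b)
           * (\<Sum>c\<in>UNIV. alice k x (a, b) c * (\<Sum>d\<in>UNIV. bob k y (a @ [c], b) d)))"
    unfolding sum_transcripts_Suc
    by (intro sum.cong) (auto simp: transcripts_def PA_snoc PB_snoc sum_distrib_left mult_ac)
  also have "\<dots> = (\<Sum>\<pi>\<in>transcripts k. PA k alice x \<pi> * PB k bob y \<pi>)"
    by (simp add: alice1 bob1 case_prod_unfold)
  finally show ?case
    using Suc by simp
qed

lemma PA_nonneg: "valid_protocol n m alice bob \<Longrightarrow> x \<in> cube n \<Longrightarrow> 0 \<le> PA m alice x \<pi>"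
  unfolding PA_def valid_protocol_def by (auto intro!: prod_nonneg)

lemma PB_nonneg: "valid_protocol n m alice bob \<Longrightarrow> y \<in> cube n \<Longrightarrow> 0 \<le> PB m bob y \<pi>"
  unfolding PB_def valid_protocol_def by (auto intro!: prod_nonneg)

lemma sum_transcripts_mixture:
  assumes "valid_protocol n m alice bob" "U \<subseteq> cube n \<times> cube n"
  shows "(\<Sum>\<pi>\<in>transcripts m. \<Sum>u\<in>U. w u * PA m alice (fst u) \<pi> * PB m bob (snd u) \<pi>) = (\<Sum>u\<in>U. w u)"
proof -
  have "(\<Sum>\<pi>\<in>transcripts m. \<Sum>u\<in>U. w u * PA m alice (fst u) \<pi> * PB m bob (snd u) \<pi>)
      = (\<Sum>u\<in>U. w u * (\<Sum>\<pi>\<in>transcripts m. PA m alice (fst u) \<pi> * PB m bob (snd u) \<pi>))"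
    by (subst sum.swap) (simp add: sum_distrib_left mult.assoc)
  also have "\<dots> = (\<Sum>u\<in>U. w u)"
    using assms by (intro sum.cong) (auto simp: sum_PA_PB_transcripts)
  finally show ?thesis .
qed

lemma sum_mult_ge_negative_part:
  fixes g :: "'a \<Rightarrow> real"
  assumes "finite X" "\<forall>x\<in>X. 0 \<le> a x \<and> a x \<le> K"
  shows "K * (\<Sum>x\<in>{x\<in>X. g x < 0}. g x) \<le> (\<Sum>x\<in>X. a x * g x)"
proof -
  have "K * (\<Sum>x\<in>{x\<in>X. g x < 0}. g x) = (\<Sum>x\<in>X. K * (if g x < 0 then g x else 0))"
    using assms(1) by (simp add: sum.inter_filter sum_distrib_left if_distrib)
  also have "\<dots> \<le> (\<Sum>x\<in>X. a x * g x)"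
    using assms(2) by (intro sum_mono) (auto simp: mult_right_mono_neg)
  finally show ?thesis .
qed

lemma bilinear_ge_of_rectangles:
  fixes \<nu> :: "'a \<times> 'b \<Rightarrow> real"
  assumes "finite X" "finite Y" "0 \<le> Ka" "0 \<le> Kb"
    and "\<forall>x\<in>X. 0 \<le> a x \<and> a x \<le> Ka" "\<forall>y\<in>Y. 0 \<le> b y \<and> b y \<le> Kb"
    and rect: "\<And>A B. A \<subseteq> X \<Longrightarrow> B \<subseteq> Y \<Longrightarrow> - c \<le> (\<Sum>u\<in>A \<times> B. \<nu> u)"
  shows "- c * Ka * Kb \<le> (\<Sum>u\<in>X \<times> Y. \<nu> u * a (fst u) * b (snd u))"
proof -
  define g where "g x = (\<Sum>y\<in>Y. \<nu> (x, y) * b y)" for x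
  define A where "A = {x\<in>X. g x < 0}"
  define h where "h y = (\<Sum>x\<in>A. \<nu> (x, y))" for y
  define B where "B = {y\<in>Y. h y < 0}"
  have "- c \<le> (\<Sum>u\<in>A \<times> B. \<nu> u)"
    by (rule rect) (auto simp: A_def B_def)
  also have "\<dots> = (\<Sum>y\<in>B. h y)"
    unfolding h_def by (subst sum.swap) (simp add: sum.cartesian_product)
  finally have "- c * Kb \<le> Kb * (\<Sum>y\<in>B. h y)"
    using assms(4) by (metis mult.commute mult_left_mono mult_minus_right)
  also have "\<dots> \<le> (\<Sum>y\<in>Y. b y * h y)"
    unfolding B_def by (rule sum_mult_ge_negative_part[OF assms(2,6)])
  also have "\<dots> = (\<Sum>x\<in>A. g x)"
    unfolding g_def h_def by (subst sum.swap) (simp add: sum_distrib_left mult_ac)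
  finally have "- c * Kb * Ka \<le> Ka * (\<Sum>x\<in>A. g x)"
    using assms(3) by (metis mult.commute mult_left_mono)
  also have "\<dots> \<le> (\<Sum>x\<in>X. a x * g x)"
    unfolding A_def by (rule sum_mult_ge_negative_part[OF assms(1,5)])
  also have "\<dots> = (\<Sum>u\<in>X \<times> Y. \<nu> u * a (fst u) * b (snd u))"
    unfolding g_def sum_distrib_left sum.cartesian_product by (auto intro!: sum.cong simp: mult_ac)
  finally show ?thesis
    by (simp add: mult_ac)
qed

lemma wt_nonneg: "\<forall>u\<in>S. 0 \<le> p u \<Longrightarrow> U \<subseteq> S \<Longrightarrow> 0 \<le> wt p U"
  unfolding wt_def by (auto intro!: sum_nonneg)

lemma wt_split_bool:
  assumes "finite S"
  shows "wt p (S \<inter> {u. f u = False}) + wt p (S \<inter> {u. f u = True}) = wt p S"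
proof -
  have "wt p (S \<inter> {u. f u = False}) + wt p (S \<inter> {u. f u = True})
      = (\<Sum>u\<in>S. (if f u = False then p u else 0) + (if f u = True then p u else 0))"
    by (simp add: wt_def sum.inter_restrict[OF assms] sum.distrib)
  also have "\<dots> = wt p S"
    by (auto simp: wt_def intro!: sum.cong)
  finally show ?thesis .
qed

lemma rel_discrepancy_rectangles:
  assumes "rel_discrepancy n f \<mu> \<epsilon> \<delta>" "is_dist (cube n \<times> cube n) \<mu>" "0 \<le> \<epsilon>" "0 \<le> \<delta>"
  obtains \<rho> where "is_dist (cube n \<times> cube n) \<rho>"
    and "\<And>A B c. A \<subseteq> cube n \<Longrightarrow> B \<subseteq> cube n \<Longrightarrow>
           - (\<delta> / 2) \<le> (\<Sum>u\<in>A \<times> B. (if f u = c then \<mu> u else 0) - (1/2 - \<epsilon>) * \<rho> u)"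
proof -
  obtain \<rho> where \<rho>: "is_dist (cube n \<times> cube n) \<rho>"
    and disc: "\<And>A B. A \<subseteq> cube n \<Longrightarrow> B \<subseteq> cube n \<Longrightarrow> wt \<rho> (A \<times> B) \<ge> \<delta> \<Longrightarrow>
           wt \<mu> ((A \<times> B) \<inter> {u. \<not> f u}) \<ge> (1/2 - \<epsilon>) * wt \<rho> (A \<times> B) \<and>
           wt \<mu> ((A \<times> B) \<inter> {u. f u}) \<ge> (1/2 - \<epsilon>) * wt \<rho> (A \<times> B)"
    using assms(1) unfolding rel_discrepancy_def by blast
  have "- (\<delta> / 2) \<le> (\<Sum>u\<in>A \<times> B. (if f u = c then \<mu> u else 0) - (1/2 - \<epsilon>) * \<rho> u)"
    if AB: "A \<subseteq> cube n" "B \<subseteq> cube n" for A B c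
  proof -
    have fin: "finite (A \<times> B)"
      using AB finite_cube by (meson finite_SigmaI finite_subset)
    have "(\<Sum>u\<in>A \<times> B. (if f u = c then \<mu> u else 0) - (1/2 - \<epsilon>) * \<rho> u)
        = wt \<mu> ((A \<times> B) \<inter> {u. f u = c}) - (1/2 - \<epsilon>) * wt \<rho> (A \<times> B)"
      using fin by (simp add: wt_def sum_subtractf sum_distrib_left sum.inter_restrict)
    moreover have "0 \<le> wt \<mu> ((A \<times> B) \<inter> {u. f u = c})" "0 \<le> wt \<rho> (A \<times> B)"
      using assms(2) \<rho> AB by (auto simp: is_dist_def intro!: wt_nonneg[of "cube n \<times> cube n"])
    moreover have "wt \<rho> (A \<times> B) \<ge> \<delta> \<Longrightarrow> wt \<mu> ((A \<times> B) \<inter> {u. f u = c}) \<ge> (1/2 - \<epsilon>) * wt \<rho> (A \<times> B)"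
      using disc[OF AB] by (cases c) auto
    moreover have "(1/2 - \<epsilon>) * wt \<rho> (A \<times> B) \<le> wt \<rho> (A \<times> B) / 2"
      using \<open>0 \<le> wt \<rho> (A \<times> B)\<close> \<open>0 \<le> \<epsilon>\<close> by (simp add: algebra_simps)
    ultimately show ?thesis
      using \<open>0 \<le> \<delta>\<close> by (cases "\<delta> \<le> wt \<rho> (A \<times> B)") linarith+
  qed
  with \<rho> that show ?thesis by blast
qed

lemma rel_discrepancy_label_weight:
  assumes "rel_discrepancy n f \<mu> \<epsilon> \<delta>" "\<delta> \<le> 1"
  shows "1/2 - \<epsilon> \<le> wt \<mu> ((cube n \<times> cube n) \<inter> {u. f u = c})"
proof -
  obtain \<rho> where "is_dist (cube n \<times> cube n) \<rho>"
    and disc: "wt \<rho> (cube n \<times> cube n) \<ge> \<delta> \<Longrightarrow>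
           wt \<mu> ((cube n \<times> cube n) \<inter> {u. \<not> f u}) \<ge> (1/2 - \<epsilon>) * wt \<rho> (cube n \<times> cube n) \<and>
           wt \<mu> ((cube n \<times> cube n) \<inter> {u. f u}) \<ge> (1/2 - \<epsilon>) * wt \<rho> (cube n \<times> cube n)"
    using assms(1) unfolding rel_discrepancy_def by blast
  then have "wt \<rho> (cube n \<times> cube n) = 1"
    by (simp add: is_dist_def wt_def)
  with disc \<open>\<delta> \<le> 1\<close> show ?thesis
    by (cases c) auto
qed

lemma univ_ext_info_leE:
  assumes "univ_ext_info_le n m alice bob M"
  obtains \<eta>A \<eta>B where "\<forall>\<pi>\<in>transcripts m. 0 \<le> \<eta>A \<pi> \<and> 0 \<le> \<eta>B \<pi>"
    and "(\<Sum>\<pi>\<in>transcripts m. \<eta>A \<pi> * \<eta>B \<pi>) = 1"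
    and "\<And>x \<pi>. x \<in> cube n \<Longrightarrow> \<pi> \<in> transcripts m \<Longrightarrow> PA m alice x \<pi> \<le> 2 ^ M * \<eta>A \<pi>"
    and "\<And>y \<pi>. y \<in> cube n \<Longrightarrow> \<pi> \<in> transcripts m \<Longrightarrow> PB m bob y \<pi> \<le> 2 ^ M * \<eta>B \<pi>"
proof -
  obtain \<eta>A \<eta>B where \<eta>0: "\<forall>\<pi>\<in>transcripts m. 0 \<le> \<eta>A \<pi> \<and> 0 \<le> \<eta>B \<pi>"
    and \<eta>1: "(\<Sum>\<pi>\<in>transcripts m. \<eta>A \<pi> * \<eta>B \<pi>) = 1"
    and ratio: "\<And>x y \<pi>. x \<in> cube n \<Longrightarrow> y \<in> cube n \<Longrightarrow> \<pi> \<in> transcripts m \<Longrightarrow>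
           (1/2) ^ M \<le> PA m alice x \<pi> / \<eta>A \<pi> \<and> PA m alice x \<pi> / \<eta>A \<pi> \<le> 2 ^ M \<and>
           (1/2) ^ M \<le> PB m bob y \<pi> / \<eta>B \<pi> \<and> PB m bob y \<pi> / \<eta>B \<pi> \<le> 2 ^ M"
    using assms unfolding univ_ext_info_le_def by blast
  \<comment> \<open>The lower bounds on the ratios, at any input, force the weights to be positive.\<close>
  have pos: "0 < \<eta>A \<pi> \<and> 0 < \<eta>B \<pi>" if "\<pi> \<in> transcripts m" for \<pi>
  proof -
    have "(0::real) < (1/2) ^ M" by simp
    with ratio[OF replicate_in_cube replicate_in_cube that] have "\<eta>A \<pi> \<noteq> 0 \<and> \<eta>B \<pi> \<noteq> 0"
      by (metis division_ring_divide_zero not_le)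
    with \<eta>0 that show ?thesis by force
  qed
  have "PA m alice x \<pi> \<le> 2 ^ M * \<eta>A \<pi>" "PB m bob x \<pi> \<le> 2 ^ M * \<eta>B \<pi>"
    if "x \<in> cube n" "\<pi> \<in> transcripts m" for x \<pi>
    using ratio[OF that(1) that(1) that(2)] pos[OF that(2)] by (simp_all add: pos_divide_le_eq)
  with \<eta>0 \<eta>1 that show ?thesis by blast
qed

definition transcript_mass ::
  "nat \<Rightarrow> nat \<Rightarrow> 'm kernel \<Rightarrow> 'm kernel \<Rightarrow> (bool list \<times> bool list \<Rightarrow> real)
    \<Rightarrow> (bool list \<times> bool list \<Rightarrow> bool) \<Rightarrow> bool \<Rightarrow> 'm list \<times> 'm list \<Rightarrow> real" where
  "transcript_mass n m alice bob \<mu> f c \<pi> =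
     (\<Sum>u\<in>(cube n \<times> cube n) \<inter> {u. f u = c}. \<mu> u * PA m alice (fst u) \<pi> * PB m bob (snd u) \<pi>)"

lemma cond_transcript_eq:
  "cond_transcript n m alice bob \<mu> f c =
     (\<lambda>\<pi>. transcript_mass n m alice bob \<mu> f c \<pi> / wt \<mu> ((cube n \<times> cube n) \<inter> {u. f u = c}))"
  by (simp add: fun_eq_iff cond_transcript_def transcript_mass_def)

lemma transcript_mass_nonneg:
  assumes "is_dist (cube n \<times> cube n) \<mu>" "valid_protocol n m alice bob"
  shows "0 \<le> transcript_mass n m alice bob \<mu> f c \<pi>"
  using assms unfolding transcript_mass_def is_dist_def
  by (auto intro!: sum_nonneg mult_nonneg_nonneg PA_nonneg PB_nonneg)

lemma sum_transcript_mass: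
  assumes "valid_protocol n m alice bob"
  shows "(\<Sum>\<pi>\<in>transcripts m. transcript_mass n m alice bob \<mu> f c \<pi>)
           = wt \<mu> ((cube n \<times> cube n) \<inter> {u. f u = c})"
  unfolding transcript_mass_def wt_def using assms by (intro sum_transcripts_mixture) auto

lemma transcript_mass_lower_bound:
  assumes "is_dist (cube n \<times> cube n) \<mu>" "rel_discrepancy n f \<mu> \<epsilon> \<delta>" "0 \<le> \<epsilon>" "0 \<le> \<delta>"
    and "valid_protocol n m alice bob" "univ_ext_info_le n m alice bob M"
  obtains L where "\<And>c \<pi>. \<pi> \<in> transcripts m \<Longrightarrow> L \<pi> \<le> transcript_mass n m alice bob \<mu> f c \<pi>"
    and "(\<Sum>\<pi>\<in>transcripts m. L \<pi>) = 1/2 - \<epsilon> - \<delta> * 4 ^ M / 2"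
proof -
  let ?C = "cube n \<times> cube n"
  let ?Q = "\<lambda>u \<pi>. PA m alice (fst u) \<pi> * PB m bob (snd u) \<pi>"
  obtain \<rho> where \<rho>: "is_dist ?C \<rho>"
    and rect: "\<And>A B c. A \<subseteq> cube n \<Longrightarrow> B \<subseteq> cube n \<Longrightarrow>
           - (\<delta> / 2) \<le> (\<Sum>u\<in>A \<times> B. (if f u = c then \<mu> u else 0) - (1/2 - \<epsilon>) * \<rho> u)"
    using rel_discrepancy_rectangles[OF assms(2,1,3,4)] by blast
  obtain \<eta>A \<eta>B where \<eta>0: "\<forall>\<pi>\<in>transcripts m. 0 \<le> \<eta>A \<pi> \<and> 0 \<le> \<eta>B \<pi>"
    and \<eta>1: "(\<Sum>\<pi>\<in>transcripts m. \<eta>A \<pi> * \<eta>B \<pi>) = 1"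
    and PA_le: "\<And>x \<pi>. x \<in> cube n \<Longrightarrow> \<pi> \<in> transcripts m \<Longrightarrow> PA m alice x \<pi> \<le> 2 ^ M * \<eta>A \<pi>"
    and PB_le: "\<And>y \<pi>. y \<in> cube n \<Longrightarrow> \<pi> \<in> transcripts m \<Longrightarrow> PB m bob y \<pi> \<le> 2 ^ M * \<eta>B \<pi>"
    using univ_ext_info_leE[OF assms(6)] by blast
  define L where "L \<pi> = (1/2 - \<epsilon>) * (\<Sum>u\<in>?C. \<rho> u * ?Q u \<pi>) - \<delta> * 4 ^ M / 2 * (\<eta>A \<pi> * \<eta>B \<pi>)" for \<pi>
  have "L \<pi> \<le> transcript_mass n m alice bob \<mu> f c \<pi>" if \<pi>: "\<pi> \<in> transcripts m" for c \<pi>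
  proof -
    have "- (\<delta> / 2) * (2 ^ M * \<eta>A \<pi>) * (2 ^ M * \<eta>B \<pi>)
        \<le> (\<Sum>u\<in>?C. ((if f u = c then \<mu> u else 0) - (1/2 - \<epsilon>) * \<rho> u)
              * PA m alice (fst u) \<pi> * PB m bob (snd u) \<pi>)"
      using \<eta>0 \<pi> assms(5) PA_le PB_le rect
      by (intro bilinear_ge_of_rectangles finite_cube) (auto intro: PA_nonneg PB_nonneg)
    also have "\<dots> = (\<Sum>u\<in>?C. if f u = c then \<mu> u * PA m alice (fst u) \<pi> * PB m bob (snd u) \<pi> else 0)
        - (1/2 - \<epsilon>) * (\<Sum>u\<in>?C. \<rho> u * ?Q u \<pi>)"
      unfolding sum_distrib_left sum_subtractf[symmetric] by (intro sum.cong) (auto simp: algebra_simps)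
    also have "\<dots> = transcript_mass n m alice bob \<mu> f c \<pi> - (1/2 - \<epsilon>) * (\<Sum>u\<in>?C. \<rho> u * ?Q u \<pi>)"
      by (simp add: transcript_mass_def sum.inter_restrict finite_cube)
    finally show ?thesis
      by (simp add: L_def power_mult_distrib[symmetric] mult_ac)
  qed
  moreover have "(\<Sum>\<pi>\<in>transcripts m. L \<pi>) = 1/2 - \<epsilon> - \<delta> * 4 ^ M / 2"
  proof -
    have "(\<Sum>\<pi>\<in>transcripts m. L \<pi>) = (1/2 - \<epsilon>) * (\<Sum>\<pi>\<in>transcripts m. \<Sum>u\<in>?C. \<rho> u * ?Q u \<pi>)
        - \<delta> * 4 ^ M / 2 * (\<Sum>\<pi>\<in>transcripts m. \<eta>A \<pi> * \<eta>B \<pi>)"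
      by (simp add: L_def sum_subtractf sum_distrib_left)
    then show ?thesis
      using sum_transcripts_mixture[OF assms(5), of ?C \<rho>] \<rho> \<eta>1 by (simp add: mult.assoc is_dist_def)
  qed
  ultimately show ?thesis
    using that by blast
qed

lemma SD_normalized_le_1:
  fixes P Q :: "'a \<Rightarrow> real"
  assumes "finite T" "\<forall>\<pi>\<in>T. 0 \<le> P \<pi> \<and> 0 \<le> Q \<pi>"
  shows "SD T (\<lambda>\<pi>. P \<pi> / sum P T) (\<lambda>\<pi>. Q \<pi> / sum Q T) \<le> 1"
proof -
  have "0 \<le> sum P T" "0 \<le> sum Q T"
    using assms(2) by (auto intro: sum_nonneg)
  then have "(\<Sum>\<pi>\<in>T. \<bar>P \<pi> / sum P T - Q \<pi> / sum Q T\<bar>) \<le> (\<Sum>\<pi>\<in>T. P \<pi> / sum P T + Q \<pi> / sum Q T)"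
    using assms(2) by (intro sum_mono) (simp add: abs_le_iff)
  also have "\<dots> = sum P T / sum P T + sum Q T / sum Q T"
    by (simp add: sum.distrib sum_divide_distrib[symmetric])
  also have "\<dots> \<le> 2"
    by (simp add: divide_le_eq_1)
  finally show ?thesis
    by (simp add: SD_def)
qed

text \<open>This also holds for \<open>p = 0\<close>, where \<open>1/0 = 0\<close>; hence the label weights
  need not be positive in the next lemma.\<close>
lemma mult_abs_inverse_minus_2_le:
  fixes p :: real
  assumes "0 \<le> p"
  shows "p * \<bar>1/p - 2\<bar> \<le> \<bar>1 - 2 * p\<bar>"
proof (cases "p = 0")
  case False
  then have "p * \<bar>1/p - 2\<bar> = \<bar>p * (1/p - 2)\<bar>"
    using assms by (simp add: abs_mult)
  also have "\<dots> = \<bar>1 - 2 * p\<bar>"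
    using False by (simp add: right_diff_distrib)
  finally show ?thesis by simp
qed simp

lemma SD_normalized_le:
  fixes P Q L :: "'a \<Rightarrow> real"
  assumes "finite T" "\<forall>\<pi>\<in>T. 0 \<le> P \<pi> \<and> 0 \<le> Q \<pi>" "\<forall>\<pi>\<in>T. L \<pi> \<le> P \<pi> \<and> L \<pi> \<le> Q \<pi>"
    and "sum P T + sum Q T = 1" "1/2 - \<epsilon> \<le> sum P T" "1/2 - \<epsilon> \<le> sum Q T"
    and "sum L T = 1/2 - \<epsilon> - c/2"
  shows "SD T (\<lambda>\<pi>. P \<pi> / sum P T) (\<lambda>\<pi>. Q \<pi> / sum Q T) \<le> 4 * \<epsilon> + c"
proof -
  define p q where "p = sum P T" and "q = sum Q T"
  have "(\<Sum>\<pi>\<in>T. \<bar>P \<pi> - Q \<pi>\<bar>) \<le> (\<Sum>\<pi>\<in>T. P \<pi> + Q \<pi> - 2 * L \<pi>)"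
    using assms(3) by (intro sum_mono) (auto simp: abs_le_iff)
  also have "\<dots> = 2 * \<epsilon> + c"
    using assms(4,7) by (simp add: sum_subtractf sum.distrib sum_distrib_left[symmetric])
  finally have close: "(\<Sum>\<pi>\<in>T. \<bar>P \<pi> - Q \<pi>\<bar>) \<le> 2 * \<epsilon> + c" .
  have "0 \<le> p" "0 \<le> q"
    using assms(2) by (auto simp: p_def q_def intro: sum_nonneg)
  then have "p * \<bar>1/p - 2\<bar> \<le> 2 * \<epsilon>" "q * \<bar>1/q - 2\<bar> \<le> 2 * \<epsilon>"
    using mult_abs_inverse_minus_2_le[of p] mult_abs_inverse_minus_2_le[of q] assms(4-6)
    by (simp_all add: p_def q_def abs_le_iff)
  have "(\<Sum>\<pi>\<in>T. \<bar>P \<pi> / p - Q \<pi> / q\<bar>)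
      \<le> (\<Sum>\<pi>\<in>T. P \<pi> * \<bar>1/p - 2\<bar> + 2 * \<bar>P \<pi> - Q \<pi>\<bar> + Q \<pi> * \<bar>1/q - 2\<bar>)"
  proof (intro sum_mono)
    fix \<pi> assume "\<pi> \<in> T"
    have "\<bar>P \<pi> / p - Q \<pi> / q\<bar> = \<bar>P \<pi> * (1/p - 2) + 2 * (P \<pi> - Q \<pi>) - Q \<pi> * (1/q - 2)\<bar>"
      by (simp add: algebra_simps)
    also have "\<dots> \<le> \<bar>P \<pi>\<bar> * \<bar>1/p - 2\<bar> + 2 * \<bar>P \<pi> - Q \<pi>\<bar> + \<bar>Q \<pi>\<bar> * \<bar>1/q - 2\<bar>"
      unfolding abs_mult[symmetric] by (smt (verit))
    finally show "\<bar>P \<pi> / p - Q \<pi> / q\<bar> \<le> P \<pi> * \<bar>1/p - 2\<bar> + 2 * \<bar>P \<pi> - Q \<pi>\<bar> + Q \<pi> * \<bar>1/q - 2\<bar>"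
      using assms(2) \<open>\<pi> \<in> T\<close> by simp
  qed
  also have "\<dots> = p * \<bar>1/p - 2\<bar> + 2 * (\<Sum>\<pi>\<in>T. \<bar>P \<pi> - Q \<pi>\<bar>) + q * \<bar>1/q - 2\<bar>"
    by (simp add: p_def q_def sum.distrib sum_distrib_left sum_distrib_right)
  finally show ?thesis
    using close \<open>p * \<bar>1/p - 2\<bar> \<le> 2 * \<epsilon>\<close> \<open>q * \<bar>1/q - 2\<bar> \<le> 2 * \<epsilon>\<close>
    by (simp add: SD_def p_def q_def)
qed

lemma le_20_bound_of_square_le:
  fixes s \<epsilon> t c K :: real
  assumes "0 \<le> \<epsilon>" "0 < t" "0 \<le> c" "c\<^sup>2 \<le> K" "s \<le> 1" "s \<le> 4 * \<epsilon> + c"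
  shows "s \<le> 20 * (\<epsilon> + t + K / t\<^sup>2)"
proof -
  have "0 \<le> K / t\<^sup>2"
    using assms(4) by (simp add: order_trans[OF zero_le_power2])
  moreover have "1 \<le> 20 * (K / t\<^sup>2) \<or> c \<le> 20 * t"
  proof (rule disjCI)
    assume "\<not> c \<le> 20 * t"
    then have "(20 * t)\<^sup>2 \<le> K"
      using assms(2,4) by (smt (verit) power_mono)
    then have "400 \<le> K / t\<^sup>2"
      using assms(2) by (simp add: power_mult_distrib le_divide_eq mult.commute)
    then show "1 \<le> 20 * (K / t\<^sup>2)"
      by simp
  qed
  moreover have "20 * (\<epsilon> + t + K / t\<^sup>2) = 20 * \<epsilon> + 20 * t + 20 * (K / t\<^sup>2)"
    by simp
  ultimately show ?thesis
    using assms by linarith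
qed

lemma le_20_bound:
  fixes s \<delta> \<epsilon> t :: real
  assumes "0 < \<delta>" "0 \<le> \<epsilon>" "0 < t" "s \<le> 1" "\<delta> \<le> 1 \<Longrightarrow> s \<le> 4 * \<epsilon> + \<delta> * 4 ^ M"
  shows "s \<le> 20 * (\<epsilon> + t + 2 ^ (4 * M) / t\<^sup>2 * \<delta>)"
proof -
  have "s \<le> 20 * (\<epsilon> + t + 2 ^ (4 * M) * \<delta> / t\<^sup>2)"
  proof (cases "\<delta> \<le> 1")
    case True
    have "(4::real) ^ M * 4 ^ M = 2 ^ (4 * M)"
      unfolding power_mult_distrib[symmetric] power_mult by simp
    then have "(\<delta> * 4 ^ M)\<^sup>2 = \<delta> * \<delta> * 2 ^ (4 * M)"
      by (simp add: power2_eq_square mult_ac)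
    also have "\<dots> \<le> 2 ^ (4 * M) * \<delta>"
      using True assms(1) by (simp add: mult_right_le_one_le mult.commute)
    finally show ?thesis
      using le_20_bound_of_square_le[OF assms(2,3) _ _ assms(4) assms(5)[OF True]] assms(1) by simp
  next
    case False
    have "1\<^sup>2 \<le> (2::real) ^ (4 * M) * \<delta>"
      using False mult_mono[of 1 "2 ^ (4 * M)" 1 \<delta>] by simp
    then show ?thesis
      using assms(2-4) by (intro le_20_bound_of_square_le[where c = 1]) auto
  qed
  then show ?thesis
    by (simp add: mult_ac)
qed

theorem lemma3p8:
  fixes n m M :: nat and \<delta> \<epsilon> \<epsilon>' :: real
    and \<mu> :: "bool list \<times> bool list \<Rightarrow> real"
    and f :: "bool list \<times> bool list \<Rightarrow> bool"
    and alice bob :: "('m::finite) kernel"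
  assumes "\<delta> > 0" and "\<epsilon> > 0" and "\<epsilon>' > 0"
    and "is_dist (cube n \<times> cube n) \<mu>"
    and "rel_discrepancy n f \<mu> \<epsilon> \<delta>"
    and "valid_protocol n m alice bob"
    and "univ_ext_info_le n m alice bob M"
  shows "SD (transcripts m) (cond_transcript n m alice bob \<mu> f False)
                            (cond_transcript n m alice bob \<mu> f True)
         \<le> 20 * (\<epsilon> + \<epsilon>' + 2 ^ (4 * M) / \<epsilon>'^2 * \<delta>)"
proof -
  let ?T = "transcripts m :: ('m list \<times> 'm list) set"
  let ?P = "transcript_mass n m alice bob \<mu> f False" and ?Q = "transcript_mass n m alice bob \<mu> f True"
  let ?SD = "SD ?T (cond_transcript n m alice bob \<mu> f False) (cond_transcript n m alice bob \<mu> f True)"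
  have masses_nonneg: "\<forall>\<pi>\<in>?T. 0 \<le> ?P \<pi> \<and> 0 \<le> ?Q \<pi>"
    using transcript_mass_nonneg[OF assms(4,6)] by blast
  have SD_eq: "?SD = SD ?T (\<lambda>\<pi>. ?P \<pi> / sum ?P ?T) (\<lambda>\<pi>. ?Q \<pi> / sum ?Q ?T)"
    by (simp add: cond_transcript_eq sum_transcript_mass[OF assms(6)])
  have SD_le_1: "?SD \<le> 1"
    unfolding SD_eq using finite_transcripts masses_nonneg by (rule SD_normalized_le_1)
  have SD_le: "?SD \<le> 4 * \<epsilon> + \<delta> * 4 ^ M" if "\<delta> \<le> 1"
  proof -
    obtain L where "\<forall>\<pi>\<in>?T. L \<pi> \<le> ?P \<pi> \<and> L \<pi> \<le> ?Q \<pi>" "sum L ?T = 1/2 - \<epsilon> - \<delta> * 4 ^ M / 2"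
      using transcript_mass_lower_bound[OF assms(4,5) _ _ assms(6,7)] assms(1,2) by (metis less_imp_le)
    moreover have "sum ?P ?T + sum ?Q ?T = wt \<mu> (cube n \<times> cube n)"
      unfolding sum_transcript_mass[OF assms(6)] by (intro wt_split_bool finite_SigmaI finite_cube)
    moreover have "wt \<mu> (cube n \<times> cube n) = 1"
      using assms(4) by (simp add: wt_def is_dist_def)
    moreover have "1/2 - \<epsilon> \<le> sum ?P ?T" "1/2 - \<epsilon> \<le> sum ?Q ?T"
      unfolding sum_transcript_mass[OF assms(6)] by (rule rel_discrepancy_label_weight[OF assms(5) that])+
    ultimately show ?thesis
      unfolding SD_eq using finite_transcripts masses_nonneg by (intro SD_normalized_le) auto
  qed
  show ?thesis
    using le_20_bound[OF assms(1) _ assms(3) SD_le_1 SD_le] assms(2) by simp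
qed

end
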